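(* For any rooted tree $T$, it is possible to assign pairwise distinct binary strings $\ell(u)$ to all nodes $u\in T$ such that $$|\ell(u)|\le 2+\log_2\big(|T|/(1+\mathsf{deg}(u))\big)$$ for every node $u$.
   Context: $|T|$ is the number of nodes of $T$, $\mathsf{deg}(u)$ is the number of children of $u$, and $|\ell(u)|$ is the length of the string $\ell(u)$. *)

theory Defs
  imports Complex_Main
begin

text \<open>Rooted (finite) trees: a node with a list of child subtrees.
  Nodes of a tree are addressed by their positions (paths from the root,
  a path being the list of child indices taken).\<close>

datatype rtree = Node "rtree list"

fun children :: "rtree \<Rightarrow> rtree list" where
  "children (Node ts) = ts"

fun subtree_at :: "rtree \<Rightarrow> nat list \<Rightarrow> rtree option" where
  "subtree_at t [] = Some t"
| "subtree_at (Node ts) (i # p) =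
     (if i < length ts then subtree_at (ts ! i) p else None)"

definition nodes :: "rtree \<Rightarrow> nat list set" where
  "nodes T = {p. subtree_at T p \<noteq> None}"

definition deg :: "rtree \<Rightarrow> nat list \<Rightarrow> nat" where
  "deg T u = length (children (the (subtree_at T u)))"

end

theory Submission imports Defs begin

text \<open>Number the nodes by decreasing degree. The node ranked \<open>k\<close> (counting from 1) is
  preceded by nodes of degree at least its own, so \<open>k (1 + deg u)\<close> is at most
  \<open>\<Sum>v (1 + deg v) \<le> 2|T|\<close>, because every non-root node is the child of exactly one node.
  Labelling the node ranked \<open>k\<close> by the binary expansion of \<open>k\<close>, of length at most
  \<open>1 + log\<^sub>2 k\<close>, gives the bound.\<close>

lemma subtree_at_snoc:
  "subtree_at T (u @ [i]) = (case subtree_at T u of None \<Rightarrow> None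
     | Some t \<Rightarrow> if i < length (children t) then Some (children t ! i) else None)"
  by (induction u arbitrary: T) (case_tac T; auto)+

lemma nodes_Node:
  "nodes (Node ts) = insert [] (\<Union>i<length ts. Cons i ` nodes (ts ! i))"
proof -
  have "p \<in> nodes (Node ts) \<longleftrightarrow> p \<in> insert [] (\<Union>i<length ts. Cons i ` nodes (ts ! i))" for p
    by (cases p) (auto simp: nodes_def)
  then show ?thesis by blast
qed

lemma finite_nodes: "finite (nodes T)"
  by (induction T) (simp add: nodes_Node)

lemma sum_deg_le_card_nodes: "(\<Sum>u\<in>nodes T. deg T u) \<le> card (nodes T)"
proof -
  let ?edges = "Sigma (nodes T) (\<lambda>u. {..<deg T u})"
  have "(\<Sum>u\<in>nodes T. deg T u) = card ?edges"
    using finite_nodes by (simp add: card_SigmaI)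
  also have "\<dots> \<le> card (nodes T)"
  proof (rule card_inj_on_le[where f = "\<lambda>(u, i). u @ [i]"])
    show "inj_on (\<lambda>(u, i). u @ [i]) ?edges" by (auto simp: inj_on_def)
    show "(\<lambda>(u, i). u @ [i]) ` ?edges \<subseteq> nodes T"
      by (auto simp: nodes_def deg_def subtree_at_snoc split: option.splits)
  qed (rule finite_nodes)
  finally show ?thesis .
qed

lemma rank_by_decreasing_weight:
  fixes w :: "'a \<Rightarrow> nat"
  assumes "finite S"
  shows "\<exists>r. bij_betw r S {..<card S} \<and> (\<forall>u\<in>S. (r u + 1) * w u \<le> (\<Sum>v\<in>S. w v))"
proof -
  obtain L where L: "distinct L" "set L = S"
    using finite_distinct_list[OF assms] by blast
  define xs where "xs = sort_key (\<lambda>u. - int (w u)) L"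
  have xs: "distinct xs" "set xs = S" "length xs = card S"
    using L by (auto simp: xs_def distinct_card[symmetric])
  have sorted: "sorted (map (\<lambda>u. - int (w u)) xs)"
    by (simp add: xs_def)
  have nth_bij: "bij_betw (nth xs) {..<card S} S"
    using xs by (intro bij_betw_nth) auto
  define r where "r = inv_into {..<card S} (nth xs)"
  have r_bij: "bij_betw r S {..<card S}"
    unfolding r_def by (rule bij_betw_inv_into[OF nth_bij])
  have "(r u + 1) * w u \<le> (\<Sum>v\<in>S. w v)" if u: "u \<in> S" for u
  proof -
    have r_lt: "r u < card S" using r_bij u by (auto simp: bij_betw_def)
    have xs_r: "xs ! r u = u"
      unfolding r_def using nth_bij u by (meson bij_betw_inv_into_right)
    have heavier: "w u \<le> w (xs ! j)" if "j \<le> r u" for j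
    proof -
      have "j < length xs" using that r_lt xs(3) by simp
      then show ?thesis
        using sorted_nth_mono[OF sorted that] r_lt xs(3) xs_r by simp
    qed
    have "(r u + 1) * w u = (\<Sum>j\<le>r u. w u)" by simp
    also have "\<dots> \<le> (\<Sum>j\<le>r u. w (xs ! j))" by (rule sum_mono) (use heavier in auto)
    also have "\<dots> \<le> (\<Sum>j<card S. w (xs ! j))" by (rule sum_mono2) (use r_lt in auto)
    also have "\<dots> = (\<Sum>v\<in>S. w v)" using sum.reindex_bij_betw[OF nth_bij] by simp
    finally show ?thesis .
  qed
  with r_bij show ?thesis by blast
qed

fun bits :: "nat \<Rightarrow> bool list" where
  "bits n = (if n = 0 then [] else odd n # bits (n div 2))"

declare bits.simps [simp del]

lemma inj_bits: "inj bits"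
proof (rule injI)
  show "bits m = bits n \<Longrightarrow> m = n" for m n
  proof (induction m arbitrary: n rule: less_induct)
    case (less m)
    show ?case
    proof (cases "m = 0 \<or> n = 0")
      case True
      with less.prems show ?thesis by (subst (asm) (1 2) bits.simps) (auto split: if_splits)
    next
      case False
      with less.prems have "odd m = odd n" "bits (m div 2) = bits (n div 2)"
        by (subst (asm) (1 2) bits.simps; simp)+
      moreover have "m div 2 = n div 2"
        using less.IH[of "m div 2" "n div 2"] False \<open>bits (m div 2) = bits (n div 2)\<close> by simp
      moreover from \<open>odd m = odd n\<close> have "m mod 2 = n mod 2"
        by (simp add: mod2_eq_if)
      ultimately show ?thesis by (metis div_mult_mod_eq)
    qed
  qed
qed

lemma two_power_length_bits_le: "m > 0 \<Longrightarrow> 2 ^ length (bits m) \<le> 2 * m"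
proof (induction m rule: less_induct)
  case (less m)
  then have "2 ^ length (bits m) = 2 * 2 ^ length (bits (m div 2))"
    by (subst bits.simps) simp
  also have "\<dots> \<le> 2 * m"
  proof (cases "m div 2 = 0")
    case True
    then show ?thesis using less.prems by (simp add: bits.simps)
  next
    case False
    then have "2 ^ length (bits (m div 2)) \<le> 2 * (m div 2)" using less by simp
    then show ?thesis by linarith
  qed
  finally show ?case .
qed

lemma length_bits_le_log: "m > 0 \<Longrightarrow> real (length (bits m)) \<le> 1 + log 2 (real m)"
proof -
  assume m: "m > 0"
  have "real (2 ^ length (bits m)) \<le> real (2 * m)"
    using two_power_length_bits_le[OF m] by (simp only: of_nat_le_iff)
  then have "log 2 (2 ^ length (bits m)) \<le> log 2 (2 * real m)"
    using m by (subst log_le_cancel_iff) auto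
  then show ?thesis
    using m by (simp add: log_nat_power log_mult)
qed

lemma length_bits_Suc_le_log_ratio:
  assumes bound: "Suc k * d \<le> 2 * n" and "d > 0"
  shows "real (length (bits (Suc k))) \<le> 2 + log 2 (real n / real d)"
proof -
  have "n > 0" using bound \<open>d > 0\<close> by (cases n) auto
  have "real (Suc k * d) \<le> real (2 * n)"
    using bound by (simp only: of_nat_le_iff)
  then have "real (Suc k) \<le> 2 * (real n / real d)"
    using \<open>d > 0\<close> by (simp add: field_simps)
  then have "log 2 (real (Suc k)) \<le> log 2 (2 * (real n / real d))"
    using \<open>n > 0\<close> \<open>d > 0\<close> by (subst log_le_cancel_iff) auto
  also have "\<dots> = 1 + log 2 (real n / real d)"
    using \<open>n > 0\<close> \<open>d > 0\<close> by (subst log_mult) auto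
  finally show ?thesis
    using length_bits_le_log[of "Suc k"] by simp
qed

theorem lemma9:
  fixes T :: rtree
  shows "\<exists>lbl :: nat list \<Rightarrow> bool list.
           inj_on lbl (nodes T) \<and>
           (\<forall>u \<in> nodes T.
              real (length (lbl u)) \<le> 2 + log 2 (real (card (nodes T)) / (1 + real (deg T u))))"
proof -
  define n where "n = card (nodes T)"
  obtain r where r_bij: "bij_betw r (nodes T) {..<n}"
    and r_bound: "\<And>u. u \<in> nodes T \<Longrightarrow> (r u + 1) * (1 + deg T u) \<le> (\<Sum>v\<in>nodes T. 1 + deg T v)"
    using rank_by_decreasing_weight[OF finite_nodes, of T "\<lambda>u. 1 + deg T u"]
    unfolding n_def by blast
  have weight_sum: "(\<Sum>v\<in>nodes T. 1 + deg T v) \<le> 2 * n"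
    using sum_deg_le_card_nodes[of T] by (simp add: sum_Suc n_def)
  show ?thesis
  proof (intro exI[of _ "\<lambda>u. bits (Suc (r u))"] conjI ballI)
    show "inj_on (\<lambda>u. bits (Suc (r u))) (nodes T)"
      using bij_betw_imp_inj_on[OF r_bij] by (auto simp: inj_on_def dest: injD[OF inj_bits])
  next
    fix u assume "u \<in> nodes T"
    then have "Suc (r u) * (1 + deg T u) \<le> 2 * n"
      using r_bound weight_sum by fastforce
    from length_bits_Suc_le_log_ratio[OF this]
    show "real (length (bits (Suc (r u)))) \<le> 2 + log 2 (real (card (nodes T)) / (1 + real (deg T u)))"
      by (simp add: n_def)
  qed
qed

end
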